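(* Let $\gamma=(\alpha,\beta)\in\mathfrak{D}$ and $T=T_\gamma$. For every integer $\ell\ge1$ there exist $C_1,C_2>0$ depending on $\gamma,\ell$ such that for all $m\ge1$, $$\sup_{x\in(0,1):\,T^m(x)\ge b_\ell}\frac{1}{(T^m)'(x)}\le C_1\,m^{-1-\frac1{\alpha\beta}},\qquad \sup_{x\in(0,1):\,T^m(x)\ge b_\ell}\frac{(T^m)''(x)}{((T^m)'(x))^2}\le C_2.$$
   Context: $\mathfrak{D}=\{(\alpha,\beta)\in(0,1)\times[1,\infty):\alpha\beta<1\}$. For $\gamma=(\alpha,\beta)\in\mathfrak{D}$, $T_\gamma(x)=x(1+2^\alpha x^\alpha)$ on $[0,\tfrac12)$ and $T_\gamma(x)=2^\beta(x-\tfrac12)^\beta$ on $[\tfrac12,1]$. Let $f_{\gamma,1}(x)=x(1+2^\alpha x^\alpha)$ on $[0,\tfrac12]$ (a bijection onto $[0,1]$) and $b_\ell=f_{\gamma,1}^{-\ell}(\tfrac12)$, the $\ell$-th preimage of $\tfrac12$ under the left branch. *)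

theory Defs
  imports "HOL-Analysis.Analysis"
begin

definition paramD :: "(real \<times> real) set" where
  "paramD = {(a, b). 0 < a \<and> a < 1 \<and> 1 \<le> b \<and> a * b < 1}"

text \<open>The map T_gamma on [0,1] (formula extended outside [0,1]; only values on [0,1] matter).\<close>
definition Tmap :: "real \<Rightarrow> real \<Rightarrow> real \<Rightarrow> real" where
  "Tmap a b x = (if x < 1/2 then x * (1 + (2 powr a) * (x powr a))
                 else (2 powr b) * ((x - 1/2) powr b))"

definition fleft :: "real \<Rightarrow> real \<Rightarrow> real" where
  "fleft a x = x * (1 + (2 powr a) * (x powr a))"

definition bseq :: "real \<Rightarrow> nat \<Rightarrow> real" where
  "bseq a l = ((the_inv_into {0..1/2} (fleft a)) ^^ l) (1/2)"

end

theory Submission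
  imports Defs
begin

text \<open>
  Write D_m and E_m for the first two derivatives of T^m, computed by the chain rule along the
  orbit. The distortion satisfies E_(m+1)/D_(m+1)^2 = T''/T'^2 + (E_m/D_m^2)/T' at T^m x, so the
  one-step inequality T''/T'^2 + W/T' <= W o T for the weight W(y) = 8/y on (0,1/2), W = 20 on
  (1/2,1) bounds it by W(T^m x) <= max (8/b_l) 20.

  For the lower bound on D_m let k(y) be the number of steps the left branch F needs to carry y
  into [1/2,1) and psi(y) = (F^k)'(y) (escape_time and escape_deriv below). Since y^(-alpha)
  drops by at least alpha/4 under F, k(y) <~ y^(-alpha); comparing with the weight
  y^(-1-alpha) exp(2 (2y)^alpha) gives psi(y) >~ y^(-1-alpha). A right-branch step y -> w = T y
  has T'(y) ~ w^(1-1/beta), hence T'(y) psi(w) >~ w^(-alpha-1/beta) ~ k(w)^p with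
  p = 1 + 1/(alpha beta). For a large enough offset B this makes
  c (n + B + k(T^n x))^p <= D_n(x) psi(T^n x) an invariant of the orbit, and psi is bounded
  on [b_l, 1).
\<close>

section \<open>Derivatives of iterates\<close>

locale C2_map_iteration =
  fixes f f' f'' :: "real \<Rightarrow> real" and S :: "real set"
  assumes open_S: "open S"
    and f_has_deriv: "y \<in> S \<Longrightarrow> (f has_real_derivative f' y) (at y)"
    and f'_has_deriv: "y \<in> S \<Longrightarrow> (f' has_real_derivative f'' y) (at y)"
    and f'_pos: "y \<in> S \<Longrightarrow> 0 < f' y"
begin

definition orbit_in :: "nat \<Rightarrow> real \<Rightarrow> bool" where
  "orbit_in m x \<longleftrightarrow> (\<forall>j<m. (f ^^ j) x \<in> S)"

lemma orbit_in_Suc: "orbit_in (Suc m) x \<longleftrightarrow> orbit_in m x \<and> (f ^^ m) x \<in> S"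
  by (auto simp: orbit_in_def less_Suc_eq)

primrec iter_deriv :: "nat \<Rightarrow> real \<Rightarrow> real" where
  "iter_deriv 0 x = 1"
| "iter_deriv (Suc m) x = f' ((f ^^ m) x) * iter_deriv m x"

primrec iter_deriv2 :: "nat \<Rightarrow> real \<Rightarrow> real" where
  "iter_deriv2 0 x = 0"
| "iter_deriv2 (Suc m) x =
     f'' ((f ^^ m) x) * (iter_deriv m x)\<^sup>2 + f' ((f ^^ m) x) * iter_deriv2 m x"

lemma iterate_has_derivatives:
  "orbit_in m x \<Longrightarrow> (f ^^ m has_real_derivative iter_deriv m x) (at x) \<and>
     (iter_deriv m has_real_derivative iter_deriv2 m x) (at x) \<and>
     eventually (orbit_in m) (nhds x)"
proof (induction m)
  case 0
  then show ?case by (auto simp: orbit_in_def)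
next
  case (Suc m)
  then have IH: "(f ^^ m has_real_derivative iter_deriv m x) (at x)"
      "(iter_deriv m has_real_derivative iter_deriv2 m x) (at x)"
      "eventually (orbit_in m) (nhds x)"
    and y: "(f ^^ m) x \<in> S"
    by (auto simp: orbit_in_Suc)
  have "((\<lambda>z. f ((f ^^ m) z)) has_real_derivative f' ((f ^^ m) x) * iter_deriv m x) (at x)"
    using DERIV_chain2[OF f_has_deriv[OF y] IH(1)] .
  then have D: "(f ^^ Suc m has_real_derivative iter_deriv (Suc m) x) (at x)"
    by (simp add: comp_def)
  have "((\<lambda>z. f' ((f ^^ m) z)) has_real_derivative f'' ((f ^^ m) x) * iter_deriv m x) (at x)"
    using DERIV_chain2[OF f'_has_deriv[OF y] IH(1)] .
  then have "((\<lambda>z. f' ((f ^^ m) z) * iter_deriv m z) has_real_derivative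
      f'' ((f ^^ m) x) * iter_deriv m x * iter_deriv m x + iter_deriv2 m x * f' ((f ^^ m) x)) (at x)"
    using IH(2) by (rule DERIV_mult)
  moreover have "(\<lambda>z. f' ((f ^^ m) z) * iter_deriv m z) = iter_deriv (Suc m)"
    by auto
  ultimately have D2: "(iter_deriv (Suc m) has_real_derivative iter_deriv2 (Suc m) x) (at x)"
    by (simp add: power2_eq_square algebra_simps)
  have "isCont (f ^^ m) x"
    using IH(1) DERIV_isCont by blast
  then have "eventually (\<lambda>z. (f ^^ m) z \<in> S) (nhds x)"
    using open_S y by (simp add: isCont_def tendsto_def eventually_nhds_conv_at)
  with IH(3) have "eventually (orbit_in (Suc m)) (nhds x)"
    by eventually_elim (simp add: orbit_in_Suc)
  with D D2 show ?case by blast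
qed

lemma deriv_funpow: "orbit_in m x \<Longrightarrow> deriv (f ^^ m) x = iter_deriv m x"
  using iterate_has_derivatives DERIV_imp_deriv by blast

lemma deriv_deriv_funpow:
  assumes "orbit_in m x"
  shows "deriv (deriv (f ^^ m)) x = iter_deriv2 m x"
proof -
  have "eventually (\<lambda>y. deriv (f ^^ m) y = iter_deriv m y) (nhds x)"
    using iterate_has_derivatives[OF assms] by (auto elim: eventually_mono simp: deriv_funpow)
  then have "(deriv (f ^^ m) has_real_derivative iter_deriv2 m x) (at x)"
    using iterate_has_derivatives[OF assms] DERIV_cong_ev[OF refl _ refl] by blast
  then show ?thesis
    by (rule DERIV_imp_deriv)
qed

lemma iter_deriv_pos: "orbit_in m x \<Longrightarrow> 0 < iter_deriv m x"
  by (induction m) (auto simp: orbit_in_Suc f'_pos)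

lemma iter_distortion_le:
  assumes step: "\<And>y. y \<in> S \<Longrightarrow> f'' y / (f' y)\<^sup>2 + W y / f' y \<le> W (f y)"
    and "0 \<le> W x" and "orbit_in m x"
  shows "iter_deriv2 m x / (iter_deriv m x)\<^sup>2 \<le> W ((f ^^ m) x)"
  using \<open>orbit_in m x\<close>
proof (induction m)
  case 0
  then show ?case using \<open>0 \<le> W x\<close> by simp
next
  case (Suc m)
  define y where "y = (f ^^ m) x"
  have orb: "orbit_in m x" and y: "y \<in> S"
    using Suc.prems by (auto simp: orbit_in_Suc y_def)
  have D: "0 < iter_deriv m x" and d: "0 < f' y"
    using iter_deriv_pos[OF orb] f'_pos[OF y] by auto
  have "iter_deriv2 (Suc m) x / (iter_deriv (Suc m) x)\<^sup>2
      = f'' y / (f' y)\<^sup>2 + (iter_deriv2 m x / (iter_deriv m x)\<^sup>2) / f' y"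
    using D d by (simp add: y_def field_simps power2_eq_square)
  also have "\<dots> \<le> f'' y / (f' y)\<^sup>2 + W y / f' y"
    using Suc.IH[OF orb] d by (intro add_left_mono divide_right_mono) (auto simp: y_def)
  also have "\<dots> \<le> W (f y)"
    using step[OF y] .
  finally show ?case
    by (simp add: y_def)
qed

lemma iter_deriv_potential_bound:
  assumes R_pos: "\<And>y. 0 < R y"
    and step: "\<And>y j. y \<in> S \<Longrightarrow>
      V y * (real j + 1 + R (f y)) powr p \<le> f' y * V (f y) * (real j + R y) powr p"
    and init: "c * R x powr p \<le> V x"
    and "orbit_in m x"
  shows "c * (real m + R ((f ^^ m) x)) powr p \<le> iter_deriv m x * V ((f ^^ m) x)"
  using \<open>orbit_in m x\<close>
proof (induction m)
  case 0
  then show ?case using init by simp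
next
  case (Suc m)
  define y where "y = (f ^^ m) x"
  define A where "A = (real m + R y) powr p"
  define B where "B = (real m + 1 + R (f y)) powr p"
  have orb: "orbit_in m x" and y: "y \<in> S"
    using Suc.prems by (auto simp: orbit_in_Suc y_def)
  have D: "0 < iter_deriv m x"
    using iter_deriv_pos[OF orb] .
  have A: "0 < A"
    using R_pos[of y] by (simp add: A_def add_nonneg_pos)
  have "c * A * B \<le> iter_deriv m x * V y * B"
    using Suc.IH[OF orb] by (intro mult_right_mono) (auto simp: A_def B_def y_def)
  also have "\<dots> \<le> iter_deriv m x * (f' y * V (f y) * A)"
    using step[OF y, of m] D by (simp add: A_def B_def mult.assoc mult_left_mono)
  finally have "A * (c * B) \<le> A * (iter_deriv (Suc m) x * V (f y))"
    by (simp add: y_def algebra_simps)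
  then show ?case
    using A by (simp add: B_def y_def add.commute add.left_commute)
qed

end

lemma two_le_mult_two_powr_inverse:
  fixes b :: real assumes "1 \<le> b" shows "2 \<le> b * 2 powr (1/b)"
proof -
  define X where "X = (1 - 1/b) * ln 2"
  have "X \<le> 1 - 1/b"
    using assms ln_2_less_1 mult_left_mono[of "ln 2" 1 "1 - 1/b"] by (simp add: X_def)
  moreover have "2 powr (-(1 - 1/b)) = exp (-X)"
    by (simp add: powr_def X_def algebra_simps)
  moreover have "1 + (-X) \<le> exp (-X)"
    by (rule exp_ge_add_one_self)
  ultimately have "1/b \<le> 2 powr (-(1 - 1/b))"
    by linarith
  also have "\<dots> = 2 powr (1/b) / 2"
    by (simp add: powr_minus_divide powr_diff)
  finally show ?thesis
    using assms by (simp add: field_simps)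
qed

lemma one_plus_powr_ge:
  fixes a t :: real assumes "0 < a" "0 \<le> t" "t \<le> 1"
  shows "1 + a*t/2 \<le> (1+t) powr a"
proof -
  have "ln (1/(1+t)) \<le> 1/(1+t) - 1"
    using assms by (intro ln_le_minus_one) auto
  then have "t/(1+t) \<le> ln (1+t)"
    using assms by (simp add: ln_div field_simps)
  moreover have "t/2 \<le> t/(1+t)"
    using assms by (intro divide_left_mono) auto
  ultimately have "t/2 \<le> ln (1+t)"
    by linarith
  then have "a * (t/2) \<le> a * ln (1+t)"
    using assms by (intro mult_left_mono) auto
  moreover have "1 + a * ln (1+t) \<le> exp (a * ln (1+t))"
    by (rule exp_ge_add_one_self)
  moreover have "(1+t) powr a = exp (a * ln (1+t))"
    using assms by (simp add: powr_def)
  ultimately show ?thesis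
    by linarith
qed

lemma one_plus_powr_le:
  fixes a t :: real assumes "0 \<le> a" "a \<le> 1" "0 \<le> t"
  shows "(1+t) powr a \<le> 1 + a*t"
  using Youngs_inequality_0[of a "1-a" "1+t" 1] assms by (simp add: algebra_simps)

lemma two_le_right_slope:
  fixes b u :: real assumes "1 \<le> b" "0 < u" "1/2 \<le> u powr b"
  shows "2 \<le> 2*b*(u powr b)/u"
proof -
  have "(1/2) powr ((b-1)/b) \<le> (u powr b) powr ((b-1)/b)"
    using assms by (intro powr_mono2) auto
  also have "\<dots> = u powr b / u"
    using assms by (simp add: powr_powr powr_diff)
  finally have "(1/2) powr ((b-1)/b) \<le> u powr b / u" .
  moreover have "(1/2::real) powr ((b-1)/b) = 2 powr (1/b) / 2"
    using assms by (simp add: diff_divide_distrib powr_diff powr_divide)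
  ultimately have "b * (2 powr (1/b) / 2) \<le> b * (u powr b / u)"
    using assms by (intro mult_left_mono) auto
  moreover have "2*b*(u powr b)/u = 2 * (b * (u powr b / u))"
    by simp
  ultimately show ?thesis
    using two_le_mult_two_powr_inverse[OF assms(1)] by linarith
qed

lemma two_le_divide_base:
  fixes b u :: real assumes "1 \<le> b" "0 < u" "u powr b < 1/2"
  shows "2 \<le> b/u"
proof -
  have "u = (u powr b) powr (1/b)"
    using assms by (simp add: powr_powr)
  also have "\<dots> \<le> (1/2) powr (1/b)"
    using assms by (intro powr_mono2) auto
  also have "\<dots> = 1 / 2 powr (1/b)"
    by (simp add: powr_divide)
  finally have "b * 2 powr (1/b) \<le> b/u"
    using assms by (simp add: field_simps)
  then show ?thesis
    using two_le_mult_two_powr_inverse[OF assms(1)] by simp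
qed

lemma shifted_powr_le_mult:
  fixes B X j p :: real
  assumes "0 < B" "0 \<le> X" "0 \<le> j" "0 \<le> p"
  shows "(j + 1 + B + X) powr p \<le> ((1 + B + X)/B) powr p * (j + B) powr p"
proof -
  have "((1 + B + X)/B) * (j + B) = (j + 1 + B + X) + j*(1 + X)/B"
    using assms by (simp add: field_simps)
  moreover have "0 \<le> j*(1 + X)/B"
    using assms by simp
  ultimately have "(j + 1 + B + X) powr p \<le> (((1 + B + X)/B) * (j + B)) powr p"
    using assms by (intro powr_mono2) auto
  also have "\<dots> = ((1 + B + X)/B) powr p * (j + B) powr p"
    by (rule powr_mult)
  finally show ?thesis .
qed

text \<open>The four cases of distortion_weight_step below, according to the halves containing y
  and T y; on the left t = (2y)^alpha, on the right u = 2y - 1 and w = u^beta.\<close>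

lemma left_distortion_ineq_to_left:
  fixes a t y :: real assumes "0 < a" "a < 1" "0 < t" "0 < y"
  shows "((1+a)*a*t/y) / (1+(1+a)*t)\<^sup>2 + (8/y) / (1+(1+a)*t) \<le> 8/(y*(1+t))"
proof -
  define P where "P = 1 + (1+a)*t"
  define q where "q = 1 + t"
  have at: "0 < a*t" and P_eq: "P = q + a*t" and q: "0 < q"
    using assms by (simp_all add: P_def q_def algebra_simps)
  then have P: "0 < P"
    by linarith
  have "(1+a)*q = q + a + a*t"
    by (simp add: q_def algebra_simps)
  then have "(1+a)*q \<le> 8*P"
    using assms at P_eq q_def by linarith
  then have "(1+a)*q*(a*t) \<le> 8*P*(a*t)"
    using at by (intro mult_right_mono) auto
  then have num: "(1+a)*a*t*q + 8*P*q \<le> 8*P\<^sup>2"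
    by (simp add: P_eq algebra_simps power2_eq_square)
  have "((1+a)*a*t/y) / P\<^sup>2 + (8/y) / P = ((1+a)*a*t*q + 8*P*q) / (y*P\<^sup>2*q)"
    using assms P q by (simp add: field_simps power2_eq_square)
  also have "\<dots> \<le> 8*P\<^sup>2 / (y*P\<^sup>2*q)"
    using assms P q num by (intro divide_right_mono) auto
  also have "\<dots> = 8/(y*q)"
    using P by (simp add: power2_eq_square)
  finally show ?thesis
    by (simp add: P_def q_def)
qed

lemma left_distortion_ineq_to_right:
  fixes a t y :: real assumes "0 < a" "a < 1" "0 < t" "0 < y" "1/2 \<le> y*(1+t)"
  shows "((1+a)*a*t/y) / (1+(1+a)*t)\<^sup>2 + (8/y) / (1+(1+a)*t) \<le> 20"
proof -
  define P where "P = 1 + (1+a)*t"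
  have at: "0 < a*t" and P_eq: "P = 1 + t + a*t"
    using assms by (simp_all add: P_def algebra_simps)
  then have P: "0 < P" "1 + t \<le> P"
    using assms by linarith+
  then have "y*(1+t) \<le> y*P"
    using assms by (intro mult_left_mono) auto
  then have inv_y: "1/y \<le> 2*P"
    using assms by (simp add: field_simps)
  have "(1+a)*a \<le> 2*1"
    using assms by (intro mult_mono) auto
  then have "(1+a)*a*t \<le> 2*t"
    using assms by (intro mult_right_mono) auto
  then have "(1+a)*a*t \<le> 2*P"
    using P by linarith
  then have "(1+a)*a*t * (1/y) \<le> (2*P) * (2*P)"
    using P assms by (intro mult_mono[OF _ inv_y]) auto
  then have "((1+a)*a*t/y) / P\<^sup>2 \<le> 4"
    using P assms by (simp add: field_simps power2_eq_square)
  moreover have "(8/y) / P \<le> 16"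
    using inv_y P assms by (simp add: field_simps)
  ultimately show ?thesis
    by (simp add: P_def)
qed

lemma right_distortion_ineq_to_left:
  fixes b u w :: real assumes "1 \<le> b" "0 < u" "u < 1" "w = u powr b" "w < 1/2"
  shows "(b-1)/(b*w) + 20/(2*b*w/u) \<le> 8/w"
proof -
  have w: "0 < w" using assms by simp
  have "10*u \<le> 7*b + 1"
  proof (cases "b \<ge> 11/7")
    case False
    have "u powr 2 \<le> u powr b"
      using assms False by (intro powr_mono') auto
    then have "(10*u)\<^sup>2 < 8\<^sup>2"
      using assms by (simp add: power_mult_distrib)
    then show ?thesis
      using assms power_mono[of 8 "10*u" 2] by linarith
  qed (use assms in linarith)
  then have "((b-1) + 10*u) / (b*w) \<le> (8*b) / (b*w)"
    using assms w by (intro divide_right_mono) auto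
  moreover have "(b-1)/(b*w) + 20/(2*b*w/u) = ((b-1) + 10*u) / (b*w)"
    using assms w by (simp add: field_simps)
  ultimately show ?thesis
    using assms by simp
qed

lemma right_distortion_ineq_to_right:
  fixes b w g :: real assumes "1 \<le> b" "1/2 \<le> w" "2 \<le> g"
  shows "(b-1)/(b*w) + 20/g \<le> 20"
proof -
  have "b*1 \<le> b*(2*w)"
    using assms by (intro mult_left_mono) auto
  then have "b - 1 \<le> 2*(b*w)"
    by (simp add: algebra_simps)
  then have "(b-1)/(b*w) \<le> 2"
    using assms by (simp add: pos_divide_le_eq)
  moreover have "20/g \<le> 10"
    using assms by (simp add: field_simps)
  ultimately show ?thesis by simp
qed

section \<open>The map and its distortion\<close>

locale lsv_params =
  fixes a b :: real
  assumes a_pos: "0 < a" and a_lt_1: "a < 1" and b_ge_1: "1 \<le> b"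
begin

abbreviation T :: "real \<Rightarrow> real" where "T \<equiv> Tmap a b"

abbreviation F :: "real \<Rightarrow> real" where "F \<equiv> fleft a"

definition dT :: "real \<Rightarrow> real" where
  "dT y = (if y < 1/2 then 1 + (1+a) * (2*y) powr a else 2*b*(2*y-1) powr (b-1))"

definition d2T :: "real \<Rightarrow> real" where
  "d2T y = (if y < 1/2 then (1+a)*a*(2*y) powr a / y else 4*b*(b-1)*(2*y-1) powr (b-2))"

lemma T_eq_F: "y < 1/2 \<Longrightarrow> T y = F y"
  by (simp add: Tmap_def fleft_def)

lemma F_eq: "0 < y \<Longrightarrow> F y = y * (1 + (2*y) powr a)"
  by (simp add: fleft_def powr_mult)

lemma T_right: "1/2 < y \<Longrightarrow> T y = (2*y-1) powr b"
  using powr_mult[of 2 "y - 1/2" b] by (simp add: Tmap_def algebra_simps)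

lemma left_branch_eqs:
  assumes "0 < y" "y < 1/2"
  defines "t \<equiv> (2*y) powr a"
  shows "0 < t" "t < 1" "T y = y*(1+t)" "F y = y*(1+t)"
    "dT y = 1 + (1+a)*t" "d2T y = (1+a)*a*t/y"
  using assms a_pos powr_less_mono2[of a "2*y" 1] T_eq_F F_eq
  by (auto simp: dT_def d2T_def)

lemma right_branch_eqs:
  assumes "1/2 < y" "y < 1"
  defines "u \<equiv> 2*y - 1"
  defines "w \<equiv> u powr b"
  shows "0 < u" "u < 1" "0 < w" "w < 1" "T y = w" "dT y = 2*b*w/u"
    "d2T y / (dT y)\<^sup>2 = (b-1)/(b*w)"
proof -
  show u: "0 < u" "u < 1" and w: "0 < w"
    using assms by auto
  show "w < 1"
    using u b_ge_1 powr_less_mono2[of b u 1] by (simp add: w_def)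
  show "T y = w"
    using assms T_right by simp
  show dT: "dT y = 2*b*w/u"
    using assms u by (simp add: dT_def u_def w_def powr_diff)
  have "d2T y = 4*b*(b-1)*w/u\<^sup>2"
    using assms u by (simp add: d2T_def u_def w_def powr_diff power2_eq_square)
  then show "d2T y / (dT y)\<^sup>2 = (b-1)/(b*w)"
    using u w b_ge_1 by (simp add: dT field_simps power2_eq_square)
qed

lemma T_has_deriv:
  assumes "y \<in> {0<..<1} - {1/2}"
  shows "(T has_real_derivative dT y) (at y)"
proof (cases "y < 1/2")
  case True
  have "((\<lambda>z. z * (1 + (2*z) powr a)) has_real_derivative dT y) (at y)"
    using assms True by (auto intro!: derivative_eq_intros simp: dT_def field_simps powr_diff)
  then show ?thesis
    by (rule has_field_derivative_transform_within_open[where S = "{0<..<1/2}"])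
      (use assms True in \<open>auto simp: T_eq_F F_eq\<close>)
next
  case False
  then have y: "1/2 < y" using assms by auto
  have "((\<lambda>z. (2*z-1) powr b) has_real_derivative dT y) (at y)"
    using y by (auto intro!: derivative_eq_intros simp: dT_def)
  then show ?thesis
    by (rule has_field_derivative_transform_within_open[where S = "{1/2<..}"])
      (use y in \<open>auto simp: T_right\<close>)
qed

lemma dT_has_deriv:
  assumes "y \<in> {0<..<1} - {1/2}"
  shows "(dT has_real_derivative d2T y) (at y)"
proof (cases "y < 1/2")
  case True
  have "((\<lambda>z. 1 + (1+a) * (2*z) powr a) has_real_derivative d2T y) (at y)"
    using assms True by (auto intro!: derivative_eq_intros simp: d2T_def powr_diff field_simps)
  then show ?thesis
    by (rule has_field_derivative_transform_within_open[where S = "{0<..<1/2}"])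
      (use assms True in \<open>auto simp: dT_def\<close>)
next
  case False
  then have y: "1/2 < y" using assms by auto
  have "((\<lambda>z. 2*b*(2*z-1) powr (b-1)) has_real_derivative d2T y) (at y)"
    using y by (auto intro!: derivative_eq_intros simp: d2T_def field_simps)
  then show ?thesis
    by (rule has_field_derivative_transform_within_open[where S = "{1/2<..}"])
      (use y in \<open>auto simp: dT_def\<close>)
qed

lemma dT_pos: "y \<in> {0<..<1} - {1/2} \<Longrightarrow> 0 < dT y"
  using a_pos b_ge_1 by (auto simp: dT_def intro!: add_pos_nonneg)

sublocale C2_map_iteration T dT d2T "{0<..<1} - {1/2}"
  by unfold_locales (auto intro: T_has_deriv dT_has_deriv dT_pos)

lemma T_maps_to_unit_interval:
  assumes "y \<in> {0<..<1} - {1/2}"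
  shows "T y \<in> {0<..<1}"
proof (cases "y < 1/2")
  case True
  define t where "t = (2*y) powr a"
  have t: "0 < t" "t < 1" and Ty: "T y = y*(1+t)"
    using left_branch_eqs assms True by (auto simp: t_def)
  have "y*(1+t) < y*2"
    using assms t by auto
  then have "T y < 1"
    using True Ty by linarith
  then show ?thesis
    using assms t Ty by auto
next
  case False
  then show ?thesis
    using assms right_branch_eqs[of y] by auto
qed

lemma orbit_in_if_funpow_pos:
  assumes "x \<in> {0<..<1}" "0 < (T ^^ m) x"
  shows "orbit_in m x" "(T ^^ m) x < 1"
proof -
  have "(orbit_in m x \<and> (T ^^ m) x \<in> {0<..<1}) \<or> (T ^^ m) x = 0" for m
  proof (induction m)
    case 0
    then show ?case using assms by (simp add: orbit_in_def)
  next
    case (Suc m)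
    show ?case
    proof (cases "(T ^^ m) x = 1/2")
      case True
      have "T ((T ^^ m) x) = 0"
        using b_ge_1 by (simp only: True) (simp add: Tmap_def)
      then show ?thesis
        by simp
    next
      case False
      have "T 0 = 0"
        by (simp add: Tmap_def)
      then show ?thesis
        using Suc False T_maps_to_unit_interval[of "(T ^^ m) x"] by (auto simp: orbit_in_Suc)
    qed
  qed
  then show "orbit_in m x" "(T ^^ m) x < 1"
    using assms by fastforce+
qed

definition distortion_weight :: "real \<Rightarrow> real" where
  "distortion_weight y = (if y < 1/2 then 8/y else 20)"

lemma distortion_weight_step:
  assumes "y \<in> {0<..<1} - {1/2}"
  shows "d2T y / (dT y)\<^sup>2 + distortion_weight y / dT y \<le> distortion_weight (T y)"
proof (cases "y < 1/2")
  case True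
  define t where "t = (2*y) powr a"
  note eqs = left_branch_eqs[of y, folded t_def]
  have "d2T y / (dT y)\<^sup>2 + distortion_weight y / dT y
      = ((1+a)*a*t/y) / (1+(1+a)*t)\<^sup>2 + (8/y) / (1+(1+a)*t)"
    using assms True eqs by (simp add: distortion_weight_def)
  then show ?thesis
    using assms True eqs a_pos a_lt_1
      left_distortion_ineq_to_left[of a t y] left_distortion_ineq_to_right[of a t y]
    by (auto simp: distortion_weight_def)
next
  case False
  then have y: "1/2 < y" "y < 1" using assms by auto
  define u where "u = 2*y - 1"
  define w where "w = u powr b"
  note eqs = right_branch_eqs[OF y, folded u_def, folded w_def]
  have lhs: "d2T y / (dT y)\<^sup>2 + distortion_weight y / dT y = (b-1)/(b*w) + 20/(2*b*w/u)"
    using y eqs by (simp add: distortion_weight_def)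
  show ?thesis
  proof (cases "w < 1/2")
    case True
    then show ?thesis
      using lhs eqs b_ge_1 right_distortion_ineq_to_left[of b u w]
      by (simp add: distortion_weight_def w_def)
  next
    case False
    then have "2 \<le> 2*b*w/u"
      using two_le_right_slope[OF b_ge_1] eqs by (simp add: w_def)
    then show ?thesis
      using lhs eqs False b_ge_1 right_distortion_ineq_to_right[of b w "2*b*w/u"]
      by (simp add: distortion_weight_def)
  qed
qed

lemma second_deriv_ratio_le:
  assumes "0 < c" "x \<in> {0<..<1}" "c \<le> (T ^^ m) x"
  shows "deriv (deriv (T ^^ m)) x / (deriv (T ^^ m) x)\<^sup>2 \<le> max (8/c) 20"
proof -
  have orb: "orbit_in m x"
    using orbit_in_if_funpow_pos assms by auto
  have "iter_deriv2 m x / (iter_deriv m x)\<^sup>2 \<le> distortion_weight ((T ^^ m) x)"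
    using assms by (intro iter_distortion_le distortion_weight_step orb)
      (auto simp: distortion_weight_def)
  also have "\<dots> \<le> max (8/c) 20"
    using assms frac_le[of 8 8 c "(T ^^ m) x"] by (auto simp: distortion_weight_def)
  finally show ?thesis
    using deriv_funpow[OF orb] deriv_deriv_funpow[OF orb] by simp
qed

section \<open>Escape from the left branch\<close>

lemma F_strict_mono:
  assumes "0 \<le> x" "x < y"
  shows "F x < F y"
proof -
  have "x * (1 + 2 powr a * x powr a) \<le> x * (1 + 2 powr a * y powr a)"
    using assms a_pos by (intro mult_left_mono add_left_mono powr_mono2) auto
  also have "\<dots> < y * (1 + 2 powr a * y powr a)"
    using assms by (intro mult_strict_right_mono) (auto intro: add_pos_nonneg)
  finally show ?thesis
    by (simp add: fleft_def)
qed

lemma the_inv_into_F_mem: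
  assumes "0 < v" "v \<le> 1"
  shows "the_inv_into {0..1/2} F v \<in> {0<..1/2}"
proof -
  have inj: "inj_on F {0..1/2}"
  proof (rule inj_onI)
    fix x y assume "x \<in> {0..1/2}" "y \<in> {0..1/2}" "F x = F y"
    then show "x = y"
      using F_strict_mono[of x y] F_strict_mono[of y x] by (cases x y rule: linorder_cases) auto
  qed
  have "v/2 * (1 + v powr a) \<le> v/2 * 2"
    using assms a_pos powr_le1[of a v] by (intro mult_left_mono) auto
  moreover have "F (v/2) = v/2 * (1 + v powr a)"
    using assms F_eq[of "v/2"] by simp
  ultimately have "F (v/2) \<le> v"
    by linarith
  moreover have "v \<le> F (1/2)"
    using assms F_eq[of "1/2"] by simp
  moreover have "continuous_on {v/2..1/2} F"
    unfolding fleft_def using assms by (intro continuous_intros) auto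
  ultimately obtain z where z: "v/2 \<le> z" "z \<le> 1/2" "F z = v"
    using IVT'[of F "v/2" v "1/2"] assms by auto
  then have "the_inv_into {0..1/2} F v = z"
    using assms by (intro the_inv_into_f_eq inj) auto
  then show ?thesis
    using z assms by auto
qed

lemma bseq_pos: "0 < bseq a l"
proof -
  have "((the_inv_into {0..1/2} F) ^^ l) (1/2) \<in> {0<..1}"
  proof (induction l)
    case (Suc l)
    then show ?case
      using the_inv_into_F_mem by fastforce
  qed simp
  then show ?thesis
    by (simp add: bseq_def)
qed

definition dF :: "real \<Rightarrow> real" where
  "dF z = 1 + (1+a) * (2*z) powr a"

lemma dF_ge_1: "1 \<le> dF z"
  using a_pos by (simp add: dF_def)

lemma F_left_eqs:
  assumes "0 < z" "z < 1/2"
  shows "0 < F z" "F z < 1" "T z = F z" "dT z = dF z" "(2*z) powr a < 1"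
  using left_branch_eqs[OF assms] T_maps_to_unit_interval[of z] T_eq_F[of z] assms
  by (auto simp: dF_def)

lemma F_powr_decrease:
  assumes "0 < z" "z < 1/2"
  shows "(F z) powr (-a) \<le> z powr (-a) - a/4"
proof -
  define t where "t = (2*z) powr a"
  have t: "0 < t" "t < 1" and Fz: "F z = z*(1+t)"
    using left_branch_eqs[OF assms] by (auto simp: t_def)
  have "(F z) powr (-a) = z powr (-a) / (1+t) powr a"
    using assms t by (simp add: Fz powr_mult powr_minus_divide)
  also have "\<dots> \<le> z powr (-a) / (1 + a*t/2)"
    using one_plus_powr_ge[of a t] a_pos t by (intro divide_left_mono) (auto simp: add_pos_nonneg)
  also have "\<dots> \<le> z powr (-a) * (1 - a*t/4)"
  proof -
    have "a*t \<le> 1"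
      using a_pos a_lt_1 t mult_le_one[of a t] by simp
    then have "1 \<le> (1 - a*t/4) * (1 + a*t/2)"
      using a_pos t by (simp add: algebra_simps power2_eq_square)
    then have "1 / (1 + a*t/2) \<le> 1 - a*t/4"
      using a_pos t by (simp add: pos_divide_le_eq add_pos_nonneg)
    then show ?thesis
      using mult_left_mono[of "1 / (1 + a*t/2)" "1 - a*t/4" "z powr (-a)"] by simp
  qed
  also have "\<dots> = z powr (-a) - a/4 * 2 powr a"
    using assms by (simp add: t_def powr_mult powr_minus field_simps)
  also have "\<dots> \<le> z powr (-a) - a/4"
    using a_pos ge_one_powr_ge_zero[of 2 a] by simp
  finally show ?thesis .
qed

lemma funpow_F_bounds:
  assumes "0 < z" "z < 1/2" "\<forall>j<n. (F ^^ j) z < 1/2"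
  shows "0 < (F ^^ n) z \<and> (F ^^ n) z < 1 \<and> ((F ^^ n) z) powr (-a) \<le> z powr (-a) - n*a/4"
  using assms(3)
proof (induction n)
  case 0
  then show ?case using assms by simp
next
  case (Suc n)
  then have IH: "0 < (F ^^ n) z" "((F ^^ n) z) powr (-a) \<le> z powr (-a) - n*a/4"
    and lt: "(F ^^ n) z < 1/2"
    by auto
  have "real (Suc n) * a/4 = real n * a/4 + a/4"
    by (simp add: algebra_simps)
  then have "(F ((F ^^ n) z)) powr (-a) \<le> z powr (-a) - real (Suc n) * a/4"
    using F_powr_decrease[OF IH(1) lt] IH(2) by linarith
  then show ?case
    using F_left_eqs[OF IH(1) lt] by simp
qed

lemma F_escapes:
  assumes "0 < z" "z < 1/2"
  shows "\<exists>n. 1/2 \<le> (F ^^ n) z"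
proof (rule ccontr)
  assume "\<not> ?thesis"
  then have "\<forall>j<n. (F ^^ j) z < 1/2" for n
    by (simp add: not_le)
  define n where "n = nat \<lceil>4 * z powr (-a) / a\<rceil> + 1"
  have "4 * z powr (-a) < real n * a"
    using a_pos by (simp add: n_def pos_divide_less_eq[symmetric]) linarith
  moreover have "0 < ((F ^^ n) z) powr (-a)" "((F ^^ n) z) powr (-a) \<le> z powr (-a) - n*a/4"
    using funpow_F_bounds[OF assms \<open>\<forall>j<n. (F ^^ j) z < 1/2\<close>] by auto
  ultimately show False
    by linarith
qed

definition escape_time :: "real \<Rightarrow> nat" where
  "escape_time z = (LEAST n. 1/2 \<le> (F ^^ n) z)"

lemma escape_time_right: "1/2 \<le> z \<Longrightarrow> escape_time z = 0"
  by (simp add: escape_time_def Least_eq_0)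

lemma escape_time_props:
  assumes "0 < z" "z < 1/2"
  shows "1/2 \<le> (F ^^ escape_time z) z" "(F ^^ escape_time z) z < 1"
    and "\<And>j. j < escape_time z \<Longrightarrow> (F ^^ j) z < 1/2"
proof -
  show escaped: "1/2 \<le> (F ^^ escape_time z) z"
    using LeastI_ex[OF F_escapes[OF assms]] by (simp add: escape_time_def)
  show before: "\<And>j. j < escape_time z \<Longrightarrow> (F ^^ j) z < 1/2"
    unfolding escape_time_def by (drule not_less_Least) simp
  show "(F ^^ escape_time z) z < 1"
    using funpow_F_bounds[OF assms] before by blast
qed

lemma escape_time_step:
  assumes "0 < z" "z < 1/2"
  shows "escape_time z = Suc (escape_time (F z))"
proof -
  obtain n where "1/2 \<le> (F ^^ n) z"
    using F_escapes[OF assms] by blast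
  then have "escape_time z = Suc (LEAST m. 1/2 \<le> (F ^^ Suc m) z)"
    unfolding escape_time_def using assms by (intro Least_Suc) auto
  also have "(\<lambda>m. (F ^^ Suc m) z) = (\<lambda>m. (F ^^ m) (F z))"
    by (simp add: funpow_Suc_right del: funpow.simps)
  finally show ?thesis
    by (simp add: escape_time_def)
qed

lemma escape_time_le:
  assumes "0 < z"
  shows "real (escape_time z) \<le> (1 + 4/a) * z powr (-a)"
proof (cases "z < 1/2")
  case True
  define k where "k = escape_time z"
  have "k \<noteq> 0"
  proof
    assume "k = 0"
    then show False
      using escape_time_props(1)[OF assms True] True by (simp add: k_def)
  qed
  then have "0 < ((F ^^ (k-1)) z) powr (-a)"
      "((F ^^ (k-1)) z) powr (-a) \<le> z powr (-a) - real (k-1) * a/4"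
    using funpow_F_bounds[OF assms True, of "k-1"] escape_time_props(3)[OF assms True]
    by (auto simp: k_def)
  then have "real (k-1) * a < 4 * z powr (-a)"
    by linarith
  then have "real (k-1) < 4 * z powr (-a) / a"
    using a_pos by (simp add: field_simps)
  moreover have "1 \<le> z powr (-a)"
    using assms True a_pos powr_le1[of a z] by (simp add: powr_minus_divide field_simps)
  ultimately show ?thesis
    using \<open>k \<noteq> 0\<close> a_pos by (simp add: k_def algebra_simps of_nat_diff)
next
  case False
  then show ?thesis
    using a_pos by (simp add: escape_time_right add_pos_nonneg)
qed

definition escape_deriv :: "real \<Rightarrow> real" where
  "escape_deriv z = (\<Prod>j<escape_time z. dF ((F ^^ j) z))"

lemma escape_deriv_right: "1/2 \<le> z \<Longrightarrow> escape_deriv z = 1"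
  by (simp add: escape_deriv_def escape_time_right)

lemma escape_deriv_step:
  assumes "0 < z" "z < 1/2"
  shows "escape_deriv z = dF z * escape_deriv (F z)"
  unfolding escape_deriv_def escape_time_step[OF assms] prod.lessThan_Suc_shift
  by (simp add: funpow_Suc_right del: funpow.simps)

lemma escape_deriv_le_power:
  assumes "0 < z"
  shows "escape_deriv z \<le> 3 ^ escape_time z"
proof (cases "z < 1/2")
  case True
  show ?thesis
    unfolding escape_deriv_def
  proof (rule prod_le_power)
    fix j assume "j \<in> {..<escape_time z}"
    then have "(F ^^ j) z < 1/2"
      using escape_time_props(3)[OF assms True] by auto
    moreover have "0 < (F ^^ j) z"
      using funpow_F_bounds[OF assms True, of j] escape_time_props(3)[OF assms True] \<open>j \<in> _\<close>
      by auto
    ultimately have "(2 * (F ^^ j) z) powr a \<le> 1"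
      using a_pos by (intro powr_le1) auto
    then have "(1+a) * (2 * (F ^^ j) z) powr a \<le> 2"
      using a_lt_1 mult_mono[of "1+a" 2 "(2 * (F ^^ j) z) powr a" 1] by simp
    then show "0 \<le> dF ((F ^^ j) z) \<and> dF ((F ^^ j) z) \<le> 3"
      using dF_ge_1[of "(F ^^ j) z"] by (simp add: dF_def)
  qed auto
next
  case False
  then show ?thesis
    by (simp add: escape_deriv_right escape_time_right)
qed

lemma escape_deriv_ge_ratio:
  fixes W :: "real \<Rightarrow> real"
  assumes W_pos: "\<And>y. 0 < y \<Longrightarrow> y < 1 \<Longrightarrow> 0 < W y"
    and W_step: "\<And>y. 0 < y \<Longrightarrow> y < 1/2 \<Longrightarrow> W y / W (F y) \<le> dF y"
    and z: "0 < z" "z < 1/2"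
  shows "W z / W ((F ^^ escape_time z) z) \<le> escape_deriv z"
proof -
  have "W z / W ((F ^^ n) z) \<le> (\<Prod>j<n. dF ((F ^^ j) z))" if "n \<le> escape_time z" for n
    using that
  proof (induction n)
    case 0
    then show ?case using W_pos[of z] z by simp
  next
    case (Suc n)
    define y where "y = (F ^^ n) z"
    have y: "0 < y" "y < 1/2"
      using funpow_F_bounds[OF z, of n] escape_time_props(3)[OF z] Suc.prems by (auto simp: y_def)
    have "W z / W ((F ^^ Suc n) z) = (W z / W y) * (W y / W (F y))"
      using W_pos[of y] y by (simp add: y_def)
    also have "\<dots> \<le> (\<Prod>j<n. dF ((F ^^ j) z)) * dF y"
    proof (rule mult_mono)
      show "W z / W y \<le> (\<Prod>j<n. dF ((F ^^ j) z))"
        using Suc by (simp add: y_def)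
      show "0 \<le> (\<Prod>j<n. dF ((F ^^ j) z))"
        using dF_ge_1 by (intro prod_nonneg) (auto intro: order_trans[OF zero_le_one])
      show "0 \<le> W y / W (F y)"
        using W_pos[of y] W_pos[of "F y"] F_left_eqs[OF y] y by simp
    qed (rule W_step[OF y])
    finally show ?case
      by (simp add: y_def)
  qed
  then show ?thesis
    by (simp add: escape_deriv_def)
qed

lemma escape_deriv_ge_inverse:
  assumes "0 < z" "z < 1/2"
  shows "1/(2*z) \<le> escape_deriv z"
proof -
  have "(1/z) / (1/(F ^^ escape_time z) z) \<le> escape_deriv z"
    using left_branch_eqs F_left_eqs a_pos
    by (intro escape_deriv_ge_ratio assms) (auto simp: dF_def)
  moreover have "(1/2) / z \<le> (F ^^ escape_time z) z / z"
    using escape_time_props(1)[OF assms] assms by (intro divide_right_mono) auto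
  ultimately show ?thesis
    by simp
qed

lemma dF_ge_weight_ratio:
  assumes "0 < y" "y < 1/2"
  shows "(y powr (-(1+a)) * exp (2 * (2*y) powr a))
     / ((F y) powr (-(1+a)) * exp (2 * (2 * F y) powr a)) \<le> dF y"
proof -
  define t where "t = (2*y) powr a"
  have t: "0 < t" "t < 1" and Fy: "F y = y*(1+t)"
    using left_branch_eqs[OF assms] by (auto simp: t_def)
  define s where "s = (2 * F y) powr a"
  have s: "s = t * (1+t) powr a"
    using assms t by (simp add: s_def t_def Fy powr_mult)
  have "t * (1 + a*t/2) \<le> t * (1+t) powr a"
    using one_plus_powr_ge[of a t] a_pos t by (intro mult_left_mono) auto
  then have "1 + a*t\<^sup>2 \<le> 1 + 2*(s - t)"
    by (simp add: s algebra_simps power2_eq_square)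
  also have "\<dots> \<le> exp (2*(s - t))"
    by (rule exp_ge_add_one_self)
  finally have e: "1 + a*t\<^sup>2 \<le> exp (2*(s - t))" .
  have "(1+t) powr (1+a) = (1+t) * (1+t) powr a"
    using t by (simp add: powr_add)
  also have "\<dots> \<le> (1+t) * (1 + a*t)"
    using one_plus_powr_le[of a t] a_pos a_lt_1 t by (intro mult_left_mono) auto
  also have "\<dots> \<le> (1 + (1+a)*t) * (1 + a*t\<^sup>2)"
    using a_pos t by (simp add: algebra_simps power2_eq_square)
  also have "\<dots> \<le> (1 + (1+a)*t) * exp (2*(s - t))"
    using e a_pos t by (intro mult_left_mono) auto
  also have "1 + (1+a)*t = dF y"
    by (simp add: dF_def t_def)
  finally have ratio: "(1+t) powr (1+a) / exp (2*(s - t)) \<le> dF y"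
    by (simp add: pos_divide_le_eq)
  have Fy_powr: "(F y) powr (-(1+a)) = y powr (-(1+a)) / (1+t) powr (1+a)"
    unfolding Fy powr_mult powr_minus_divide[of "1+t" "1+a"] by simp
  have exp_s: "exp (2 * s) = exp (2 * t) * exp (2 * (s - t))"
    by (simp add: mult_exp_exp)
  have "(y powr (-(1+a)) * exp (2 * (2*y) powr a)) / ((F y) powr (-(1+a)) * exp (2 * (2 * F y) powr a))
      = (1+t) powr (1+a) / exp (2*(s - t))"
    unfolding t_def[symmetric] s_def[symmetric] Fy_powr exp_s using assms t by simp
  with ratio show ?thesis
    by simp
qed

lemma escape_deriv_ge_powr:
  assumes "0 < z" "z < 1/2"
  shows "exp (-4) / 4 * z powr (-(1+a)) \<le> escape_deriv z"
proof -
  define W where "W y = y powr (-(1+a)) * exp (2 * (2*y) powr a)" for y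
  define e where "e = (F ^^ escape_time z) z"
  have e: "1/2 \<le> e" "e < 1"
    using escape_time_props[OF assms] by (auto simp: e_def)
  have "z powr (-(1+a)) \<le> W z"
    using assms by (simp add: W_def)
  moreover have "W e \<le> 4 * exp 4"
  proof -
    have "e powr (-(1+a)) \<le> (1/2) powr (-(1+a))"
      using e a_pos by (intro powr_mono2') auto
    also have "\<dots> = 2 powr (1+a)"
      using powr_minus[of "1/2::real" "1+a"] powr_divide[of 1 2 "1+a"] by simp
    also have "\<dots> \<le> 2 powr 2"
      using a_lt_1 by (intro powr_mono) auto
    finally have "e powr (-(1+a)) \<le> 4"
      by simp
    moreover have "(2*e) powr a \<le> 2 powr 1"
      using e a_pos a_lt_1 powr_mono2[of a "2*e" 2] powr_mono[of a 1 2] by auto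
    ultimately show ?thesis
      unfolding W_def using e by (intro mult_mono) auto
  qed
  moreover have "0 < W e"
    using e by (simp add: W_def)
  ultimately have "z powr (-(1+a)) / (4 * exp 4) \<le> W z / W e"
    using assms by (intro frac_le) (auto simp: W_def)
  also have "\<dots> \<le> escape_deriv z"
    unfolding W_def e_def using dF_ge_weight_ratio by (intro escape_deriv_ge_ratio assms) auto
  finally show ?thesis
    by (simp add: exp_minus field_simps)
qed

section \<open>Growth of the derivative\<close>

definition expo :: real where
  "expo = 1 + 1/(a*b)"

definition kappa :: real where
  "kappa = exp (-4) / 2 * (1 + 4/a) powr (-expo)"

definition offset :: real where
  "offset = max (4 / kappa powr (1/expo)) ((1 + 2 / kappa powr (1/expo)) / (2 powr (1/expo) - 1))"

lemma expo_gt_1: "1 < expo"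
  using a_pos b_ge_1 by (simp add: expo_def)

lemma kappa_pos: "0 < kappa"
proof -
  have "0 < 1 + 4/a"
    using a_pos by (simp add: add_pos_pos)
  then show ?thesis
    by (simp add: kappa_def)
qed

lemma offset_pos: "0 < offset"
  using kappa_pos by (simp add: offset_def less_max_iff_disj)

lemma offset_ratio_le:
  "((1 + offset + real k)/offset) powr expo \<le> max 2 (kappa * real k powr expo)"
proof -
  define g where "g = kappa powr (1/expo)"
  define q where "q = 2 powr (1/expo)"
  have g: "0 < g" "g powr expo = kappa"
    using kappa_pos expo_gt_1 by (simp_all add: g_def powr_powr)
  have q: "1 < q" "q powr expo = 2"
    using expo_gt_1 powr_less_mono[of 0 "1/expo" 2] by (simp_all add: q_def powr_powr)
  have B: "4/g \<le> offset" "(1 + 2/g)/(q - 1) \<le> offset"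
    by (simp_all add: offset_def g_def q_def)
  have ratio: "(1 + offset + real k)/offset = 1 + (1 + real k)/offset"
    using offset_pos by (simp add: field_simps)
  show ?thesis
  proof (cases "real k \<le> 2/g")
    case True
    have "(1 + real k)/offset \<le> (1 + 2/g)/offset"
      using True offset_pos by (intro divide_right_mono) auto
    also have "\<dots> \<le> q - 1"
      using B(2) q offset_pos by (simp add: field_simps)
    finally have "((1 + offset + real k)/offset) powr expo \<le> q powr expo"
      using ratio offset_pos expo_gt_1 by (intro powr_mono2) auto
    then show ?thesis
      using q by simp
  next
    case False
    then have "2 < g * real k"
      using g by (simp add: field_simps)
    then have "1 \<le> real k"
      by (cases k) auto
    have "1/offset \<le> g/4"
      using B(1) g offset_pos by (simp add: field_simps)
    then have "(1 + real k) * (1/offset) \<le> (2 * real k) * (g/4)"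
      using \<open>1 \<le> real k\<close> offset_pos by (intro mult_mono) auto
    moreover have "(1 + real k) * (1/offset) = (1 + real k)/offset"
      and "(2 * real k) * (g/4) = g * real k / 2"
      by simp_all
    ultimately have "(1 + offset + real k)/offset \<le> g * real k"
      using ratio \<open>2 < g * real k\<close> by linarith
    then have "((1 + offset + real k)/offset) powr expo \<le> (g * real k) powr expo"
      using offset_pos expo_gt_1 by (intro powr_mono2) auto
    also have "\<dots> = kappa * real k powr expo"
      using g by (simp add: powr_mult)
    finally show ?thesis
      by simp
  qed
qed

lemma kappa_escape_time_le:
  assumes "0 < w"
  shows "kappa * real (escape_time w) powr expo \<le> exp (-4) / 2 * (w powr (-a)) powr expo"
proof -
  have c: "0 < 1 + 4/a"
    using a_pos by (simp add: add_pos_pos)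
  have "real (escape_time w) powr expo \<le> ((1 + 4/a) * w powr (-a)) powr expo"
    using escape_time_le[OF assms] expo_gt_1 by (intro powr_mono2) auto
  also have "\<dots> = (1 + 4/a) powr expo * (w powr (-a)) powr expo"
    by (rule powr_mult)
  finally have "kappa * real (escape_time w) powr expo
      \<le> kappa * ((1 + 4/a) powr expo * (w powr (-a)) powr expo)"
    using kappa_pos by (intro mult_left_mono) auto
  also have "\<dots> = exp (-4) / 2 * ((1 + 4/a) powr (-expo) * (1 + 4/a) powr expo)
      * (w powr (-a)) powr expo"
    by (simp add: kappa_def)
  also have "(1 + 4/a) powr (-expo) * (1 + 4/a) powr expo = 1"
    using c by (simp add: powr_add[symmetric])
  finally show ?thesis
    by simp
qed

lemma right_slope_escape_deriv_ge:
  assumes "1/2 < y" "y < 1" "T y < 1/2"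
  shows "exp (-4) / 2 * ((T y) powr (-a)) powr expo \<le> dT y * escape_deriv (T y)"
proof -
  define u where "u = 2*y - 1"
  define w where "w = u powr b"
  note eqs = right_branch_eqs[OF assms(1,2), folded u_def, folded w_def]
  have u: "u = w powr (1/b)"
    using eqs b_ge_1 by (simp add: w_def powr_powr)
  have "-a * expo = -a + -(1/b)"
    using a_pos b_ge_1 by (simp add: expo_def field_simps)
  then have "(w powr (-a)) powr expo = w powr (-a) * w powr (-(1/b))"
    by (simp only: powr_powr powr_add)
  also have "\<dots> = w powr (-a) / u"
    using u by (simp add: powr_minus_divide)
  finally have V: "(w powr (-a)) powr expo = w powr (-a) / u" .
  have "w * w powr (-(1+a)) = w powr (-a)"
    using eqs by (simp add: powr_add[symmetric] powr_mult_base)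
  then have split:
      "(2*b*w/u) * (exp (-4) / 4 * w powr (-(1+a))) = b * (exp (-4) / 2) * (w powr (-a) / u)"
    using eqs by (simp add: field_simps)
  have "exp (-4) / 2 * (w powr (-a)) powr expo = exp (-4) / 2 * (w powr (-a) / u)"
    by (simp add: V)
  also have "\<dots> \<le> b * (exp (-4) / 2) * (w powr (-a) / u)"
    using eqs b_ge_1 by (intro mult_right_mono) auto
  also have "\<dots> = (2*b*w/u) * (exp (-4) / 4 * w powr (-(1+a)))"
    by (rule split[symmetric])
  also have "\<dots> \<le> (2*b*w/u) * escape_deriv w"
    using escape_deriv_ge_powr[of w] eqs assms b_ge_1 by (intro mult_left_mono) auto
  finally show ?thesis
    using eqs by simp
qed

lemma right_branch_gain:
  assumes "1/2 < y" "y < 1"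
  shows "2 \<le> dT y * escape_deriv (T y)"
    and "kappa * real (escape_time (T y)) powr expo \<le> dT y * escape_deriv (T y)"
proof -
  define u where "u = 2*y - 1"
  define w where "w = u powr b"
  note eqs = right_branch_eqs[OF assms, folded u_def, folded w_def]
  have "2 \<le> dT y * escape_deriv (T y) \<and>
      kappa * real (escape_time (T y)) powr expo \<le> dT y * escape_deriv (T y)"
  proof (cases "w < 1/2")
    case True
    have "(2*b*w/u) * (1/(2*w)) \<le> dT y * escape_deriv w"
      using escape_deriv_ge_inverse[of w] eqs True b_ge_1 by (intro mult_mono) auto
    moreover have "(2*b*w/u) * (1/(2*w)) = b/u"
      using eqs by (simp add: field_simps)
    moreover have "2 \<le> b/u"
      using two_le_divide_base[OF b_ge_1] eqs True by (simp add: w_def)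
    moreover have "kappa * real (escape_time w) powr expo \<le> dT y * escape_deriv w"
      using kappa_escape_time_le[of w] right_slope_escape_deriv_ge[OF assms] eqs True by simp
    ultimately show ?thesis
      using eqs by simp
  next
    case False
    then have "2 \<le> dT y"
      using two_le_right_slope[OF b_ge_1] eqs by (simp add: w_def)
    then show ?thesis
      using False eqs by (simp add: escape_time_right escape_deriv_right)
  qed
  then show "2 \<le> dT y * escape_deriv (T y)"
    and "kappa * real (escape_time (T y)) powr expo \<le> dT y * escape_deriv (T y)"
    by auto
qed

lemma potential_step:
  assumes "y \<in> {0<..<1} - {1/2}"
  shows "escape_deriv y * (real j + 1 + (offset + real (escape_time (T y)))) powr expo
    \<le> dT y * escape_deriv (T y) * (real j + (offset + real (escape_time y))) powr expo"
proof (cases "y < 1/2")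
  case True
  then have "escape_deriv y = dT y * escape_deriv (T y)"
    and "escape_time y = Suc (escape_time (T y))"
    using assms escape_deriv_step escape_time_step F_left_eqs by auto
  then show ?thesis
    by (simp add: add_ac)
next
  case False
  then have y: "1/2 < y" "y < 1"
    using assms by auto
  define k where "k = escape_time (T y)"
  have "(real j + 1 + (offset + real k)) powr expo
      \<le> ((1 + offset + real k)/offset) powr expo * (real j + offset) powr expo"
    using shifted_powr_le_mult[of offset "real k" "real j" expo] offset_pos expo_gt_1
    by (simp add: add_ac)
  also have "\<dots> \<le> dT y * escape_deriv (T y) * (real j + offset) powr expo"
    using offset_ratio_le[of k] right_branch_gain[OF y] by (intro mult_right_mono) (auto simp: k_def)
  finally show ?thesis
    using False by (simp add: k_def escape_deriv_right escape_time_right)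
qed

definition c_low :: real where
  "c_low = exp (-4) / 4 / (offset + 1 + 4/a) powr expo"

lemma c_low_pos: "0 < c_low"
proof -
  have "0 < offset + 1 + 4/a"
    using offset_pos a_pos by (simp add: add_pos_pos)
  then show ?thesis
    by (simp add: c_low_def)
qed

lemma offset_escape_time_powr_le:
  assumes "0 < y" "y < 1/2"
  shows "(offset + real (escape_time y)) powr expo \<le> (offset + 1 + 4/a) powr expo * y powr (-(1+a))"
proof -
  define B where "B = offset + 1 + 4/a"
  have "1 \<le> y powr (-a)"
    using assms a_pos powr_le1[of a y] by (simp add: powr_minus_divide field_simps)
  then have "offset \<le> offset * y powr (-a)"
    using offset_pos mult_left_mono[of 1 "y powr (-a)" offset] by simp
  then have "offset + real (escape_time y) \<le> B * y powr (-a)"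
    using escape_time_le[OF assms(1)] by (simp add: B_def algebra_simps)
  then have "(offset + real (escape_time y)) powr expo \<le> (B * y powr (-a)) powr expo"
    using offset_pos expo_gt_1 by (intro powr_mono2) auto
  also have "\<dots> = B powr expo * y powr (-(a * expo))"
    by (simp add: powr_mult powr_powr)
  also have "\<dots> \<le> B powr expo * y powr (-(1+a))"
  proof -
    have "a * expo \<le> 1 + a"
      using a_pos b_ge_1 by (simp add: expo_def field_simps)
    then show ?thesis
      using assms by (intro mult_left_mono powr_mono') auto
  qed
  finally show ?thesis
    by (simp add: B_def)
qed

lemma potential_init:
  assumes "0 < y" "y < 1"
  shows "c_low * (offset + real (escape_time y)) powr expo \<le> escape_deriv y"
proof -
  have B: "0 < offset + 1 + 4/a"
    using offset_pos a_pos by (simp add: add_pos_pos)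
  show ?thesis
  proof (cases "y < 1/2")
    case True
    have "c_low * (offset + real (escape_time y)) powr expo
        \<le> c_low * ((offset + 1 + 4/a) powr expo * y powr (-(1+a)))"
      using offset_escape_time_powr_le[OF assms(1) True] c_low_pos by (intro mult_left_mono) auto
    also have "\<dots> = exp (-4) / 4 * y powr (-(1+a))"
      using B by (simp add: c_low_def)
    also have "\<dots> \<le> escape_deriv y"
      using escape_deriv_ge_powr[OF assms(1) True] .
    finally show ?thesis .
  next
    case False
    have "offset powr expo \<le> (offset + 1 + 4/a) powr expo"
      using offset_pos a_pos expo_gt_1 by (intro powr_mono2) auto
    then have "offset powr expo / (offset + 1 + 4/a) powr expo \<le> 1"
      using B by simp
    then have "exp (-4) / 4 * (offset powr expo / (offset + 1 + 4/a) powr expo) \<le> exp (-4) / 4 * 1"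
      by (intro mult_left_mono) auto
    then have "c_low * offset powr expo \<le> exp (-4) / 4"
      by (simp add: c_low_def)
    also have "\<dots> \<le> 1"
      using exp_le_one_iff[of "-4 :: real"] by (simp del: exp_le_one_iff)
    finally show ?thesis
      using False by (simp add: escape_time_right escape_deriv_right)
  qed
qed

lemma escape_deriv_le_const:
  assumes "0 < c" "c \<le> y"
  shows "escape_deriv y \<le> 3 powr ((1 + 4/a) * c powr (-a))"
proof -
  have "escape_deriv y \<le> 3 ^ escape_time y"
    using escape_deriv_le_power assms by auto
  also have "\<dots> = 3 powr real (escape_time y)"
    by (simp add: powr_realpow)
  also have "\<dots> \<le> 3 powr ((1 + 4/a) * c powr (-a))"
  proof (rule powr_mono)
    have "real (escape_time y) \<le> (1 + 4/a) * y powr (-a)"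
      using escape_time_le assms by simp
    also have "\<dots> \<le> (1 + 4/a) * c powr (-a)"
      using assms a_pos by (intro mult_left_mono powr_mono2') (auto intro: add_nonneg_nonneg)
    finally show "real (escape_time y) \<le> (1 + 4/a) * c powr (-a)" .
  qed simp
  finally show ?thesis .
qed

lemma inverse_deriv_le:
  assumes "0 < c" "x \<in> {0<..<1}" "c \<le> (T ^^ m) x" "1 \<le> m"
  shows "1 / deriv (T ^^ m) x
    \<le> 3 powr ((1 + 4/a) * c powr (-a)) / c_low * real m powr (-1 - 1/(a*b))"
proof -
  define y where "y = (T ^^ m) x"
  define P where "P = 3 powr ((1 + 4/a) * c powr (-a))"
  have orb: "orbit_in m x" and y: "0 < y" "y < 1"
    using orbit_in_if_funpow_pos assms by (auto simp: y_def)
  have D: "0 < iter_deriv m x"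
    using iter_deriv_pos[OF orb] .
  have "c_low * real m powr expo \<le> c_low * (real m + (offset + real (escape_time y))) powr expo"
    using offset_pos c_low_pos expo_gt_1 by (intro mult_left_mono powr_mono2) auto
  also have "\<dots> \<le> iter_deriv m x * escape_deriv y"
    unfolding y_def using offset_pos potential_step potential_init assms(2) orb
    by (intro iter_deriv_potential_bound[where R = "\<lambda>y. offset + real (escape_time y)"]) auto
  also have "\<dots> \<le> iter_deriv m x * P"
    using D escape_deriv_le_const[OF assms(1)] assms(3)
    by (intro mult_left_mono) (auto simp: y_def P_def)
  finally have "1 / iter_deriv m x \<le> P / (c_low * real m powr expo)"
    using D c_low_pos assms(4) by (simp add: field_simps)
  also have "\<dots> = P / c_low * real m powr (-expo)"
    by (simp add: powr_minus_divide)
  also have "-expo = -1 - 1/(a*b)"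
    by (simp add: expo_def)
  finally show ?thesis
    using deriv_funpow[OF orb] by (simp add: P_def)
qed

end

theorem lemma2p11:
  fixes a b :: real and l :: nat
  assumes "(a, b) \<in> paramD" and "l \<ge> 1"
  shows "\<exists>C1 C2. C1 > 0 \<and> C2 > 0 \<and>
    (\<forall>m::nat. m \<ge> 1 \<longrightarrow>
      (\<forall>x \<in> {0<..<1}. ((Tmap a b) ^^ m) x \<ge> bseq a l \<longrightarrow>
          1 / deriv ((Tmap a b) ^^ m) x \<le> C1 * real m powr (-1 - 1 / (a * b)) \<and>
          deriv (deriv ((Tmap a b) ^^ m)) x / (deriv ((Tmap a b) ^^ m) x)\<^sup>2 \<le> C2))"
proof -
  interpret lsv_params a b
    using assms(1) by unfold_locales (auto simp: paramD_def)
  define c where "c = bseq a l"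
  have "0 < c"
    using bseq_pos by (simp add: c_def)
  have "0 < 3 powr ((1 + 4/a) * c powr (-a)) / c_low" "0 < max (8/c) 20"
    using c_low_pos by auto
  moreover have "1 / deriv (T ^^ m) x
      \<le> 3 powr ((1 + 4/a) * c powr (-a)) / c_low * real m powr (-1 - 1/(a*b))"
    and "deriv (deriv (T ^^ m)) x / (deriv (T ^^ m) x)\<^sup>2 \<le> max (8/c) 20"
    if "1 \<le> m" "x \<in> {0<..<1}" "c \<le> (T ^^ m) x" for m x
    using inverse_deriv_le[OF \<open>0 < c\<close> that(2,3,1)] second_deriv_ratio_le[OF \<open>0 < c\<close> that(2,3)]
    by auto
  ultimately show ?thesis
    unfolding c_def by blast
qed

end
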